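(* The composition map $(c,d)\mapsto c\circ d$, restricted to $\mathtt{CA}\times\mathtt{SUR}$, is continuous from $(\mathtt{CA},\delta)\times(\mathtt{SUR},\delta)$ to $(\mathtt{CA},\delta)$.
   Context: $\Sigma$ is a finite alphabet with $|\Sigma|\ge2$. For $r\in\mathbb{N}$, $N(r)=[-r,r]\subseteq\mathbb{Z}$. A cellular automaton (CA) $c:\Sigma^\mathbb{Z}\to\Sigma^\mathbb{Z}$ is a map given by a local function $F:\Sigma^{N(r)}\to\Sigma$ via $c(x)_i=F(x_{[i-r,i+r]})$ for some $r\in\mathbb{N}$ (any such $r$ is a radius of $c$; the minimal one is $r(c)$); equivalently, a continuous shift-commuting map. $\mathtt{CA}$ is the set of all CA on $\Sigma^\mathbb{Z}$ and $\mathtt{SUR}$ the set of surjective ones. For $c,d\in\mathtt{CA}$ and a common radius $r$, the difference set is $D^c_d=\{w\in\Sigma^{N(r)}\mid c(x)_0\ne d(x)_0 \text{ for } x \text{ with } x_{[-r,r]}=w\}$ (i.e. the words on which the local rules of $c$ and $d$ give different central outputs), and the metric is $\delta(c,d)=|D^c_d|/|\Sigma|^{2r+1}$, which does not depend on the choice of $r$. $(\mathtt{CA},\delta)$ is called the uniform Bernoulli space. *)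

theory Defs
  imports Complex_Main "HOL-Library.FuncSet"
begin

definition N :: "nat \<Rightarrow> int set" where
  "N r = {- int r .. int r}"

definition has_radius :: "((int \<Rightarrow> 'a) \<Rightarrow> (int \<Rightarrow> 'a)) \<Rightarrow> nat \<Rightarrow> bool" where
  "has_radius c r \<longleftrightarrow>
     (\<exists>F :: (int \<Rightarrow> 'a) \<Rightarrow> 'a. \<forall>x i. c x i = F (restrict (\<lambda>j. x (i + j)) (N r)))"

definition CA :: "((int \<Rightarrow> 'a) \<Rightarrow> (int \<Rightarrow> 'a)) set" where
  "CA = {c. \<exists>r. has_radius c r}"

definition SUR :: "((int \<Rightarrow> 'a) \<Rightarrow> (int \<Rightarrow> 'a)) set" where
  "SUR = {c \<in> CA. surj c}"

definition rad :: "((int \<Rightarrow> 'a) \<Rightarrow> (int \<Rightarrow> 'a)) \<Rightarrow> nat" where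
  "rad c = (LEAST r. has_radius c r)"

definition diff_set :: "nat \<Rightarrow> ((int \<Rightarrow> 'a) \<Rightarrow> (int \<Rightarrow> 'a)) \<Rightarrow> ((int \<Rightarrow> 'a) \<Rightarrow> (int \<Rightarrow> 'a))
    \<Rightarrow> (int \<Rightarrow> 'a) set" where
  "diff_set r c d = {w \<in> N r \<rightarrow>\<^sub>E (UNIV :: 'a set).
      \<exists>x. restrict x (N r) = w \<and> c x 0 \<noteq> d x 0}"

definition delta :: "((int \<Rightarrow> 'a::finite) \<Rightarrow> (int \<Rightarrow> 'a)) \<Rightarrow> ((int \<Rightarrow> 'a) \<Rightarrow> (int \<Rightarrow> 'a)) \<Rightarrow> real" where
  "delta c d = real (card (diff_set (max (rad c) (rad d)) c d))
      / real (card (UNIV :: 'a set)) ^ (2 * max (rad c) (rad d) + 1)"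

end

theory Submission
  imports Defs
begin

text \<open>
  The proof establishes the quantitative bound
    delta (c \<circ> d) (c' \<circ> d') \<le> (2 r(c) + 1) delta d d' + delta c c'
  for c, c' \<in> CA, d \<in> CA and surjective d', from which continuity is immediate.

  Distances are read as densities: for a predicate G on configurations that depends only
  on the window [-r, r], the density of G is the proportion of words of length 2r+1 whose
  configuration satisfies G; it does not change when r is enlarged. Passing from c \<circ> d
  to c \<circ> d' can only matter where d and d' differ somewhere in the window of c, giving
  the factor 2 r(c) + 1 by a union bound. Passing from c \<circ> d' to c' \<circ> d'
  costs exactly delta c c', because a surjective cellular automaton preserves the uniform
  measure: by the balance property every word of length n has exactly |\<Sigma>|^(2s)
  preimages of length n + 2s under the sliding block map of a radius-s automaton.
\<close>

definition words :: "nat \<Rightarrow> 'a list set" where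
  "words n = {xs. length xs = n}"

lemma card_words: "card (words n :: 'a::finite list set) = card (UNIV::'a set) ^ n"
  using card_lists_length_eq[of "UNIV::'a set" n] by (simp add: words_def)

lemma finite_words [simp]: "finite (words n :: 'a::finite list set)"
  using finite_lists_length_eq[of "UNIV::'a set" n] by (simp add: words_def)

lemma finite_words_with [simp]: "finite {xs :: 'a::finite list. length xs = n \<and> P xs}"
  by (rule finite_subset[OF _ finite_words[of n]]) (auto simp: words_def)

lemma card_words_with_middle:
  assumes "S \<subseteq> words m"
  shows "card {X :: 'a::finite list. length X = a + m + b \<and> take m (drop a X) \<in> S}
     = card (UNIV::'a set) ^ (a + b) * card S"
proof -
  have eq: "{X :: 'a list. length X = a + m + b \<and> take m (drop a X) \<in> S}
     = (\<lambda>(A, Y, B). A @ Y @ B) ` (words a \<times> S \<times> words b)"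
  proof safe
    fix X :: "'a list" assume "length X = a + m + b" "take m (drop a X) \<in> S"
    moreover have "X = take a X @ take m (drop a X) @ drop (a + m) X"
      by (metis append_take_drop_id drop_drop add.commute)
    ultimately show "X \<in> (\<lambda>(A, Y, B). A @ Y @ B) ` (words a \<times> S \<times> words b)"
      by (intro image_eqI[where x="(take a X, take m (drop a X), drop (a + m) X)"])
        (auto simp: words_def)
  next
    fix A Y B :: "'a list" assume "A \<in> words a" "Y \<in> S" "B \<in> words b"
    with assms show "length (A @ Y @ B) = a + m + b" "take m (drop a (A @ Y @ B)) \<in> S"
      by (auto simp: words_def)
  qed
  have inj: "inj_on (\<lambda>(A, Y, B). A @ Y @ B) (words a \<times> S \<times> words b)"
    using assms by (auto simp: inj_on_def words_def)
  have "finite S" using assms finite_subset finite_words by blast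
  then show ?thesis unfolding eq card_image[OF inj]
    by (simp add: card_cartesian_product card_words power_add)
qed

definition slide :: "('a list \<Rightarrow> 'a) \<Rightarrow> nat \<Rightarrow> 'a list \<Rightarrow> 'a list" where
  "slide f s X = map (\<lambda>i. f (take (2*s+1) (drop i X))) [0..<length X - 2*s]"

lemma length_slide [simp]: "length (slide f s X) = length X - 2*s"
  by (simp add: slide_def)

lemma take_slide:
  assumes "n + 2*s \<le> length X"
  shows "take n (slide f s X) = slide f s (take (n + 2*s) X)"
proof (rule nth_equalityI)
  fix i assume "i < length (take n (slide f s X))"
  then have i: "i < n" "i < length X - 2*s" using assms by simp_all
  then have "take (2*s+1) (drop i (take (n + 2*s) X)) = take (2*s+1) (drop i X)"
    by (simp add: drop_take min_def)
  with i assms show "take n (slide f s X) ! i = slide f s (take (n + 2*s) X) ! i"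
    by (simp add: slide_def)
qed (use assms in simp)

lemma drop_slide: "drop m (slide f s X) = slide f s (drop m X)"
  by (rule nth_equalityI) (auto simp: slide_def add.commute)

text \<open>An elementary estimate, a discrete form of (1 + 1/a)^k \<ge> 1 + k/a.\<close>
lemma power_growth_bound: "(a::nat) ^ k * (a + k) \<le> (a + 1) ^ k * a"
proof (induction k)
  case (Suc k)
  have "a ^ Suc k * (a + Suc k) \<le> (a + 1) * (a ^ k * (a + k))"
    by (simp add: algebra_simps)
  also have "\<dots> \<le> (a + 1) * ((a + 1) ^ k * a)"
    by (rule mult_left_mono[OF Suc.IH]) simp
  finally show ?case by (simp add: algebra_simps)
qed simp

text \<open>A constant factor cannot compensate exponential growth: Q^k \<le> p^k Q for all k
  forces Q \<le> p.\<close>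
lemma le_of_power_bound:
  assumes bound: "\<And>k. (Q::nat) ^ k \<le> p ^ k * Q" and "Q \<ge> 1"
  shows "Q \<le> p"
proof (rule ccontr)
  assume "\<not> Q \<le> p"
  define a where "a = Q - 1"
  have Qa: "Q = a + 1" and pa: "p \<le> a" using \<open>Q \<ge> 1\<close> \<open>\<not> Q \<le> p\<close> by (simp_all add: a_def)
  show False
  proof (cases "a = 0")
    case True
    then show False using bound[of 1] Qa pa by simp
  next
    case False
    define k where "k = a * Q"
    have "Q ^ k \<le> p ^ k * Q" by (rule bound)
    also have "\<dots> \<le> a ^ k * Q" using pa by (simp add: power_mono)
    finally have h: "Q ^ k \<le> a ^ k * Q" .
    have "a ^ k * (a + k) \<le> Q ^ k * a" using power_growth_bound[of a k] Qa by simp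
    also have "\<dots> \<le> a ^ k * Q * a" using h by simp
    finally have "a ^ k * (a + k) \<le> a ^ k * (Q * a)" by (simp add: ac_simps)
    then have "a + k \<le> Q * a" using False by simp
    then show False using False by (simp add: k_def ac_simps)
  qed
qed

fun chain :: "'a list \<Rightarrow> nat \<Rightarrow> nat \<Rightarrow> 'a list \<Rightarrow> bool" where
  "chain v g 0 Y = True"
| "chain v g (Suc k) Y = (take (length v) Y = v \<and> chain v g k (drop (length v + g) Y))"

text \<open>Balance property of surjective sliding block maps (Hedlund): if every word is an
  image under slide f s, then every word has exactly q^(2s) preimages, q the alphabet size.\<close>
context
  fixes f :: "'a::finite list \<Rightarrow> 'a" and s :: nat
  assumes slide_onto: "\<And>v. \<exists>X. length X = length v + 2*s \<and> slide f s X = v"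
begin

definition preimages :: "'a list \<Rightarrow> 'a list set" where
  "preimages v = {X. length X = length v + 2*s \<and> slide f s X = v}"

definition chains :: "'a list \<Rightarrow> nat \<Rightarrow> 'a list set" where
  "chains v k = {Y. length Y = k * (length v + 2*s) \<and> chain v (2*s) k Y}"

definition chain_preimages :: "'a list \<Rightarrow> nat \<Rightarrow> 'a list set" where
  "chain_preimages v k =
     {X. length X = k * (length v + 2*s) + 2*s \<and> chain v (2*s) k (slide f s X)}"

text \<open>A chain is determined by its k gaps, which are arbitrary.\<close>
lemma card_chains: "card (chains v k) = card (UNIV::'a set) ^ (2*s*k)"
proof (induction k)
  case 0
  have "chains v 0 = {[]}" by (auto simp: chains_def)
  then show ?case by simp
next
  case (Suc k)
  let ?m = "length v + 2*s"
  have eq: "chains v (Suc k) = (\<lambda>(g, Y). v @ g @ Y) ` (words (2*s) \<times> chains v k)"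
  proof safe
    fix Y assume Y: "Y \<in> chains v (Suc k)"
    have "Y = take (length v) Y @ take (2*s) (drop (length v) Y) @ drop ?m Y"
      by (metis append_take_drop_id drop_drop add.commute)
    then show "Y \<in> (\<lambda>(g, Y). v @ g @ Y) ` (words (2*s) \<times> chains v k)"
      using Y by (intro image_eqI[where x="(take (2*s) (drop (length v) Y), drop ?m Y)"])
        (auto simp: chains_def words_def)
  qed (auto simp: chains_def words_def)
  have inj: "inj_on (\<lambda>(g, Y). v @ g @ Y) (words (2*s) \<times> chains v k)"
    by (auto simp: inj_on_def words_def)
  show ?case unfolding eq card_image[OF inj] card_cartesian_product Suc
    by (simp add: card_words power_add)
qed

text \<open>A preimage of a chain splits into preimages of the individual copies of v.\<close>
lemma card_chain_preimages:
  "card (chain_preimages v k) = card (preimages v) ^ k * card (UNIV::'a set) ^ (2*s)"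
proof (induction k)
  case 0
  have "chain_preimages v 0 = words (2*s)" by (auto simp: chain_preimages_def words_def)
  then show ?case by (simp add: card_words)
next
  case (Suc k)
  let ?m = "length v + 2*s"
  have split: "X \<in> chain_preimages v (Suc k) \<longleftrightarrow>
      take ?m X \<in> preimages v \<and> drop ?m X \<in> chain_preimages v k"
    if len: "length X = ?m + (k * ?m + 2*s)" for X
  proof -
    have "take (length v) (slide f s X) = slide f s (take ?m X)"
      using len by (intro take_slide) simp
    moreover have "drop ?m (slide f s X) = slide f s (drop ?m X)" by (rule drop_slide)
    ultimately show ?thesis
      using len by (simp add: chain_preimages_def preimages_def)
  qed
  have eq: "chain_preimages v (Suc k) = (\<lambda>(A, B). A @ B) ` (preimages v \<times> chain_preimages v k)"
  proof safe
    fix X assume X: "X \<in> chain_preimages v (Suc k)"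
    then have "length X = ?m + (k * ?m + 2*s)" by (simp add: chain_preimages_def)
    then show "X \<in> (\<lambda>(A, B). A @ B) ` (preimages v \<times> chain_preimages v k)"
      using X split by (intro image_eqI[where x="(take ?m X, drop ?m X)"]) auto
  next
    fix A B assume A: "A \<in> preimages v" and B: "B \<in> chain_preimages v k"
    then have "length A = ?m" "length (A @ B) = ?m + (k * ?m + 2*s)"
      by (simp_all add: preimages_def chain_preimages_def)
    then show "A @ B \<in> chain_preimages v (Suc k)" using split[of "A @ B"] A B by simp
  qed
  have inj: "inj_on (\<lambda>(A, B). A @ B) (preimages v \<times> chain_preimages v k)"
    by (auto simp: inj_on_def preimages_def)
  show ?case unfolding eq card_image[OF inj] card_cartesian_product Suc by simp
qed

text \<open>Every chain of copies of v is an image, so there are at least as many chain preimages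
  as chains; letting k grow forces every word to have at least q^(2s) preimages.\<close>
lemma card_preimages_ge: "card (UNIV::'a set) ^ (2*s) \<le> card (preimages v)"
proof (rule le_of_power_bound)
  show "1 \<le> card (UNIV::'a set) ^ (2*s)" by (simp add: Suc_leI card_gt_0_iff)
  fix k
  have "chains v k \<subseteq> slide f s ` chain_preimages v k"
  proof
    fix Y assume Y: "Y \<in> chains v k"
    obtain X where "length X = length Y + 2*s" "slide f s X = Y" using slide_onto by blast
    with Y show "Y \<in> slide f s ` chain_preimages v k"
      by (intro image_eqI[where x=X]) (auto simp: chains_def chain_preimages_def)
  qed
  then have "card (chains v k) \<le> card (slide f s ` chain_preimages v k)"
    by (intro card_mono) (simp_all add: chain_preimages_def)
  also have "\<dots> \<le> card (chain_preimages v k)"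
    by (rule card_image_le) (simp add: chain_preimages_def)
  finally show "(card (UNIV::'a set) ^ (2*s)) ^ k \<le> card (preimages v) ^ k * card (UNIV::'a set) ^ (2*s)"
    by (simp add: card_chains card_chain_preimages power_mult)
qed

text \<open>Balance: since the q^(n+2s) words of length n+2s are distributed among the q^n words
  of length n, the lower bound is attained by every word.\<close>
lemma card_preimages: "card (preimages v) = card (UNIV::'a set) ^ (2*s)"
proof (rule ccontr)
  let ?Q = "card (UNIV::'a set) ^ (2*s)"
  define n where "n = length v"
  assume "card (preimages v) \<noteq> ?Q"
  then have "?Q < card (preimages v)" using card_preimages_ge[of v] by simp
  have "(\<Sum>u\<in>(words n :: 'a list set). ?Q) < (\<Sum>u\<in>words n. card (preimages u))"
  proof (rule sum_strict_mono_ex1)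
    show "\<exists>u\<in>words n. ?Q < card (preimages u)"
      using \<open>?Q < card (preimages v)\<close> by (auto simp: words_def n_def)
  qed (simp_all add: card_preimages_ge)
  also have "\<dots> = card (\<Union>u\<in>words n. preimages u)"
    by (rule card_UN_disjoint[symmetric]) (auto simp: preimages_def)
  also have "(\<Union>u\<in>words n. preimages u) = (words (n + 2*s) :: 'a list set)"
    by (auto simp: words_def preimages_def)
  finally show False by (simp add: card_words power_add)
qed

lemma card_slide_vimage:
  assumes "A \<subseteq> words n"
  shows "card {X. length X = n + 2*s \<and> slide f s X \<in> A} = card A * card (UNIV::'a set) ^ (2*s)"
proof -
  have fA: "finite A" using assms finite_subset finite_words by blast
  have "{X. length X = n + 2*s \<and> slide f s X \<in> A} = (\<Union>v\<in>A. preimages v)"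
    using assms by (auto simp: words_def preimages_def)
  moreover have "card (\<Union>v\<in>A. preimages v) = (\<Sum>v\<in>A. card (preimages v))"
    by (rule card_UN_disjoint) (auto simp: fA preimages_def)
  moreover have "\<dots> = (\<Sum>v\<in>A. card (UNIV::'a set) ^ (2*s))"
    by (simp add: card_preimages)
  ultimately show ?thesis by simp
qed

end

text \<open>place a xs: the configuration carrying the word xs at positions a, a + 1, ...
  (arbitrary elsewhere).\<close>
definition place :: "int \<Rightarrow> 'a list \<Rightarrow> int \<Rightarrow> 'a" where
  "place a xs i = xs ! nat (i - a)"

lemma has_radius_local:
  assumes "has_radius c s" "\<forall>j. i - int s \<le> j \<and> j \<le> i + int s \<longrightarrow> x j = y j"
  shows "c x i = c y i"
proof -
  obtain F where F: "\<forall>x i. c x i = F (restrict (\<lambda>j. x (i + j)) (N s))"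
    using assms(1) by (auto simp: has_radius_def)
  have "restrict (\<lambda>j. x (i + j)) (N s) = restrict (\<lambda>j. y (i + j)) (N s)"
    using assms(2) by (intro restrict_ext) (auto simp: N_def)
  then show ?thesis using F by metis
qed

lemma has_radius_shift:
  assumes "has_radius c s"
  shows "c (\<lambda>j. x (j + t)) i = c x (i + t)"
proof -
  obtain F where F: "\<forall>x i. c x i = F (restrict (\<lambda>j. x (i + j)) (N s))"
    using assms by (auto simp: has_radius_def)
  then show ?thesis by (simp add: ac_simps)
qed

lemma has_radius_mono:
  assumes "has_radius c r" "r \<le> r'"
  shows "has_radius c r'"
proof -
  obtain F where F: "\<forall>x i. c x i = F (restrict (\<lambda>j. x (i + j)) (N r))"
    using assms(1) by (auto simp: has_radius_def)
  have "N r \<subseteq> N r'" using assms(2) by (auto simp: N_def)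
  then have "\<forall>x i. c x i = F (restrict (restrict (\<lambda>j. x (i + j)) (N r')) (N r))"
    using F by (simp add: Int_absorb1)
  then show ?thesis unfolding has_radius_def by (intro exI[of _ "\<lambda>w. F (restrict w (N r))"])
qed

lemma has_radius_comp:
  assumes "has_radius c r" "has_radius d s"
  shows "has_radius (c \<circ> d) (r + s)"
proof -
  obtain F where F: "\<forall>x i. c x i = F (restrict (\<lambda>j. x (i + j)) (N r))"
    using assms(1) by (auto simp: has_radius_def)
  obtain G where G: "\<forall>x i. d x i = G (restrict (\<lambda>j. x (i + j)) (N s))"
    using assms(2) by (auto simp: has_radius_def)
  have "(c \<circ> d) x i = F (\<lambda>j\<in>N r. G (\<lambda>k\<in>N s. restrict (\<lambda>j. x (i + j)) (N (r + s)) (j + k)))"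
    for x i
  proof -
    have "restrict (\<lambda>j. d x (i + j)) (N r)
      = (\<lambda>j\<in>N r. G (\<lambda>k\<in>N s. restrict (\<lambda>j. x (i + j)) (N (r + s)) (j + k)))"
    proof (rule restrict_ext)
      fix j assume j: "j \<in> N r"
      have "restrict (\<lambda>k. x (i + j + k)) (N s)
          = (\<lambda>k\<in>N s. restrict (\<lambda>j. x (i + j)) (N (r + s)) (j + k))"
        using j by (intro restrict_ext) (auto simp: N_def ac_simps)
      then show "d x (i + j) = G (\<lambda>k\<in>N s. restrict (\<lambda>j. x (i + j)) (N (r + s)) (j + k))"
        using G by simp
    qed
    then show ?thesis using F by simp
  qed
  then show ?thesis unfolding has_radius_def
    by (intro exI[of _ "\<lambda>w. F (\<lambda>j\<in>N r. G (\<lambda>k\<in>N s. w (j + k)))"] allI)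
qed

lemma CA_comp: "c \<in> CA \<Longrightarrow> d \<in> CA \<Longrightarrow> c \<circ> d \<in> CA"
  unfolding CA_def using has_radius_comp by blast

lemma rad_has_radius: "c \<in> CA \<Longrightarrow> has_radius c (rad c)"
  unfolding CA_def rad_def by (auto intro: LeastI_ex)

lemma has_radius_of_rad_le: "c \<in> CA \<Longrightarrow> rad c \<le> r \<Longrightarrow> has_radius c r"
  using has_radius_mono[OF rad_has_radius] .

lemma rad_le: "has_radius c r \<Longrightarrow> rad c \<le> r"
  unfolding rad_def by (rule Least_le)

lemma place_window:
  assumes "has_radius d s" "a \<le> i - int s" "i + int s < a + int (length X)"
  shows "d (place a X) i = d (place (- int s) (take (2*s+1) (drop (nat (i - int s - a)) X))) 0"
proof -
  have "place a X j = place (- int s) (take (2*s+1) (drop (nat (i - int s - a)) X)) (j - i)"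
    if "i - int s \<le> j \<and> j \<le> i + int s" for j
  proof -
    have "nat (j - a) = nat (i - int s - a) + nat (j - i + int s)"
      "nat (j - i + int s) < 2*s+1" "nat (i - int s - a) + nat (j - i + int s) < length X"
      using that assms(2,3) by auto
    then show ?thesis by (simp add: place_def)
  qed
  then have "d (place a X) i
      = d (\<lambda>j. place (- int s) (take (2*s+1) (drop (nat (i - int s - a)) X)) (j - i)) i"
    by (intro has_radius_local[OF assms(1)]) auto
  then show ?thesis using has_radius_shift[OF assms(1), where t="- i" and i=i] by simp
qed

definition local_rule :: "((int \<Rightarrow> 'a) \<Rightarrow> (int \<Rightarrow> 'a)) \<Rightarrow> nat \<Rightarrow> 'a list \<Rightarrow> 'a" where
  "local_rule d s Y = d (place (- int s) Y) 0"

lemma slide_local_rule_nth: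
  assumes "has_radius d s" "k < length X - 2*s"
  shows "slide (local_rule d s) s X ! k = d (place 0 X) (int k + int s)"
  using place_window[OF assms(1), of 0 "int k + int s" X] assms(2)
  by (simp add: slide_def local_rule_def)

lemma slide_onto_of_surj:
  assumes "has_radius d s" "surj d"
  shows "\<exists>X. length X = length v + 2*s \<and> slide (local_rule d s) s X = v"
proof -
  obtain x where x: "d x = place 0 v" using assms(2) by (metis surjD)
  define X where "X = map (\<lambda>i. x (int i - int s)) [0..<length v + 2*s]"
  have "slide (local_rule d s) s X = v"
  proof (rule nth_equalityI)
    fix k assume "k < length (slide (local_rule d s) s X)"
    then have k: "k < length X - 2*s" by simp
    have "slide (local_rule d s) s X ! k = d (place 0 X) (int k + int s)"
      by (rule slide_local_rule_nth[OF assms(1) k])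
    also have "\<dots> = d (\<lambda>j. x (j + - int s)) (int k + int s)"
      using k by (intro has_radius_local[OF assms(1)]) (auto simp: place_def X_def)
    also have "\<dots> = d x (int k)"
      using has_radius_shift[OF assms(1), of x "- int s" "int k + int s"] by simp
    also have "\<dots> = v ! k" by (simp add: x place_def)
    finally show "slide (local_rule d s) s X ! k = v ! k" .
  qed (simp add: X_def)
  then show ?thesis by (intro exI[of _ X]) (simp add: X_def)
qed

definition window_local :: "nat \<Rightarrow> ((int \<Rightarrow> 'a) \<Rightarrow> bool) \<Rightarrow> bool" where
  "window_local r G \<longleftrightarrow> (\<forall>x y. (\<forall>j\<in>N r. x j = y j) \<longrightarrow> G x = G y)"

lemma window_local_disagree:
  assumes "has_radius c r" "has_radius d r"
  shows "window_local r (\<lambda>x. c x 0 \<noteq> d x 0)"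
  unfolding window_local_def
proof (intro allI impI)
  fix x y :: "int \<Rightarrow> 'a" assume "\<forall>j\<in>N r. x j = y j"
  then have "c x 0 = c y 0" "d x 0 = d y 0"
    by (auto intro!: has_radius_local[OF assms(1)] has_radius_local[OF assms(2)] simp: N_def)
  then show "(c x 0 \<noteq> d x 0) = (c y 0 \<noteq> d y 0)" by simp
qed

definition count :: "nat \<Rightarrow> ((int \<Rightarrow> 'a) \<Rightarrow> bool) \<Rightarrow> nat" where
  "count r G = card {Y. length Y = 2*r+1 \<and> G (place (- int r) Y)}"

definition density :: "nat \<Rightarrow> ((int \<Rightarrow> 'a::finite) \<Rightarrow> bool) \<Rightarrow> real" where
  "density r G = real (count r G) / real (card (UNIV::'a set)) ^ (2*r+1)"

lemma count_refine:
  fixes G :: "(int \<Rightarrow> 'a::finite) \<Rightarrow> bool"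
  assumes G: "window_local r G" and "r \<le> T"
  shows "count T G = card (UNIV::'a set) ^ (2*(T-r)) * count r G"
proof -
  let ?S = "{Y. length Y = 2*r+1 \<and> G (place (- int r) Y)}"
  have "G (place (- int T) X) = G (place (- int r) (take (2*r+1) (drop (T-r) X)))"
    if "length X = 2*T+1" for X :: "'a list"
  proof -
    have "place (- int T) X j = place (- int r) (take (2*r+1) (drop (T-r) X)) j" if "j \<in> N r" for j
    proof -
      have "nat (j + int T) = (T - r) + nat (j + int r)" "nat (j + int r) < 2*r+1"
        using \<open>j \<in> N r\<close> \<open>r \<le> T\<close> by (auto simp: N_def)
      then show ?thesis using \<open>length X = 2*T+1\<close> \<open>r \<le> T\<close> by (simp add: place_def)
    qed
    then show ?thesis using G by (simp add: window_local_def)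
  qed
  then have "{Y. length Y = 2*T+1 \<and> G (place (- int T) Y)}
     = {X. length X = (T-r) + (2*r+1) + (T-r) \<and> take (2*r+1) (drop (T-r) X) \<in> ?S}"
    using \<open>r \<le> T\<close> by auto
  moreover have "?S \<subseteq> words (2*r+1)" by (auto simp: words_def)
  ultimately show ?thesis unfolding count_def
    by (simp only: card_words_with_middle) (simp add: mult_2)
qed

lemma density_refine:
  fixes G :: "(int \<Rightarrow> 'a::finite) \<Rightarrow> bool"
  assumes "window_local r G" "r \<le> T"
  shows "density T G = density r G"
proof -
  have "2*T+1 = 2*(T-r) + (2*r+1)" using assms(2) by simp
  then show ?thesis unfolding density_def count_refine[OF assms]
    by (simp add: power_add card_gt_0_iff)
qed

lemma density_le_add:
  fixes G P Q :: "(int \<Rightarrow> 'a::finite) \<Rightarrow> bool"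
  assumes "\<And>x. G x \<Longrightarrow> P x \<or> Q x"
  shows "density r G \<le> density r P + density r Q"
proof -
  have "count r G \<le> card ({Y. length Y = 2*r+1 \<and> P (place (- int r) Y)}
                        \<union> {Y. length Y = 2*r+1 \<and> Q (place (- int r) Y)})"
    unfolding count_def using assms by (intro card_mono) auto
  also have "\<dots> \<le> count r P + count r Q" unfolding count_def by (rule card_Un_le)
  finally have "real (count r G) \<le> real (count r P) + real (count r Q)" by simp
  then show ?thesis unfolding density_def add_divide_distrib[symmetric]
    by (rule divide_right_mono) simp
qed

lemma card_diff_set:
  assumes "has_radius c r" "has_radius d r"
  shows "card (diff_set r c d) = count r (\<lambda>x. c x 0 \<noteq> d x 0)"
proof -
  let ?D = "{Y. length Y = 2*r+1 \<and> c (place (- int r) Y) 0 \<noteq> d (place (- int r) Y) 0}"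
  let ?\<phi> = "\<lambda>Y. restrict (place (- int r) Y) (N r)"
  have inj: "inj_on ?\<phi> ?D"
  proof (rule inj_onI)
    fix Y Z assume Y: "Y \<in> ?D" and Z: "Z \<in> ?D" and e: "?\<phi> Y = ?\<phi> Z"
    show "Y = Z"
    proof (rule nth_equalityI)
      fix i assume "i < length Y"
      then have "int i - int r \<in> N r" using Y by (auto simp: N_def)
      then have "?\<phi> Y (int i - int r) = ?\<phi> Z (int i - int r)" using e by simp
      then show "Y ! i = Z ! i" using \<open>int i - int r \<in> N r\<close> by (simp add: place_def)
    qed (use Y Z in simp)
  qed
  have "?\<phi> ` ?D = diff_set r c d"
  proof (intro equalityI subsetI)
    fix w assume "w \<in> ?\<phi> ` ?D"
    then show "w \<in> diff_set r c d" unfolding diff_set_def by auto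
  next
    fix w assume "w \<in> diff_set r c d"
    then obtain x where w: "restrict x (N r) = w" "c x 0 \<noteq> d x 0"
      unfolding diff_set_def by auto
    define Y where "Y = map (\<lambda>i. x (int i - int r)) [0..<2*r+1]"
    have agree: "\<forall>j\<in>N r. place (- int r) Y j = x j"
    proof
      fix j assume "j \<in> N r"
      then have "nat (j + int r) < 2*r+1" "- int r \<le> j" by (auto simp: N_def)
      then show "place (- int r) Y j = x j" by (simp add: place_def Y_def del: upt_Suc)
    qed
    then have "?\<phi> Y = w" using w(1) by (auto intro!: restrict_ext)
    moreover have "(c (place (- int r) Y) 0 \<noteq> d (place (- int r) Y) 0) = (c x 0 \<noteq> d x 0)"
      using window_local_disagree[OF assms] agree unfolding window_local_def by blast
    ultimately show "w \<in> ?\<phi> ` ?D" using w(2) by (intro image_eqI[where x=Y]) (auto simp: Y_def)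
  qed
  then show ?thesis unfolding count_def card_image[OF inj, symmetric] by simp
qed

lemma delta_eq_density:
  fixes c d :: "(int \<Rightarrow> 'a::finite) \<Rightarrow> (int \<Rightarrow> 'a)"
  assumes "c \<in> CA" "d \<in> CA" "max (rad c) (rad d) \<le> T"
  shows "delta c d = density T (\<lambda>x. c x 0 \<noteq> d x 0)"
proof -
  let ?r = "max (rad c) (rad d)"
  have hc: "has_radius c ?r" and hd: "has_radius d ?r"
    using assms(1,2) by (auto intro: has_radius_of_rad_le)
  have "delta c d = density ?r (\<lambda>x. c x 0 \<noteq> d x 0)"
    unfolding delta_def density_def card_diff_set[OF hc hd] ..
  also have "\<dots> = density T (\<lambda>x. c x 0 \<noteq> d x 0)"
    by (rule density_refine[symmetric, OF window_local_disagree[OF hc hd] assms(3)])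
  finally show ?thesis .
qed

text \<open>A surjective cellular automaton preserves the uniform measure. For G depending on the
  window N R, the words of length 2(R + s) + 1 whose configuration x satisfies G (d x) are
  exactly the preimages under the sliding block map of the words counted for G.\<close>
lemma count_comp_surj:
  fixes d :: "(int \<Rightarrow> 'a::finite) \<Rightarrow> (int \<Rightarrow> 'a)"
  assumes d: "has_radius d s" "surj d" and G: "window_local R G"
  shows "count (R + s) (\<lambda>x. G (d x)) = count R G * card (UNIV::'a set) ^ (2*s)"
proof -
  let ?f = "local_rule d s"
  let ?A = "{V. length V = 2*R+1 \<and> G (place (- int R) V)}"
  have "G (d (place (- int (R + s)) X)) = G (place (- int R) (slide ?f s X))"
    if len: "length X = 2*(R + s)+1" for X
  proof -
    have "d (place (- int (R + s)) X) j = place (- int R) (slide ?f s X) j" if "j \<in> N R" for j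
    proof -
      have "nat (j + int R) < length X - 2*s" using that len by (auto simp: N_def)
      then have "place (- int R) (slide ?f s X) j
          = ?f (take (2*s+1) (drop (nat (j + int R)) X))"
        by (simp add: place_def slide_def)
      also have "\<dots> = d (place (- int (R + s)) X) j"
        using place_window[OF d(1), of "- int (R + s)" j X] that len
        by (simp add: N_def local_rule_def)
      finally show ?thesis by simp
    qed
    then show ?thesis using G by (simp add: window_local_def)
  qed
  then have eq: "{Y. length Y = 2*(R + s)+1 \<and> G (d (place (- int (R + s)) Y))}
      = {X. length X = (2*R+1) + 2*s \<and> slide ?f s X \<in> ?A}"
    by auto
  show ?thesis unfolding count_def eq
    by (rule card_slide_vimage[OF slide_onto_of_surj[OF d]]) (auto simp: words_def)
qed

lemma density_comp_surj:
  fixes d :: "(int \<Rightarrow> 'a::finite) \<Rightarrow> (int \<Rightarrow> 'a)"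
  assumes "has_radius d s" "surj d" "window_local R G"
  shows "density (R + s) (\<lambda>x. G (d x)) = density R G"
proof -
  let ?q = "real (card (UNIV::'a set))"
  have q: "?q ^ (2*s) > 0" by (simp add: card_gt_0_iff)
  have "?q ^ (2*(R + s)+1) = ?q ^ (2*R+1) * ?q ^ (2*s)"
    unfolding power_add[symmetric] by (simp add: algebra_simps)
  then show ?thesis unfolding density_def count_comp_surj[OF assms] using q by simp
qed

text \<open>If c (d x) and c (d' x) differ at 0, then d x and d' x differ somewhere in the
  window of c; each of the 2r+1 positions contributes at most the density of the
  disagreement of d and d'.\<close>
lemma count_disagree_comp_le:
  fixes c d d' :: "(int \<Rightarrow> 'a::finite) \<Rightarrow> (int \<Rightarrow> 'a)"
  assumes hc: "has_radius c r" and hd: "has_radius d s" and hd': "has_radius d' s"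
  shows "count (r + s) (\<lambda>x. c (d x) 0 \<noteq> c (d' x) 0)
     \<le> (2*r+1) * (card (UNIV::'a set) ^ (2*r) * count s (\<lambda>x. d x 0 \<noteq> d' x 0))"
proof -
  let ?T = "r + s"
  let ?S = "{Y. length Y = 2*s+1 \<and> d (place (- int s) Y) 0 \<noteq> d' (place (- int s) Y) 0}"
  define A where "A k = {X :: 'a list. length X = 2*?T+1 \<and> take (2*s+1) (drop k X) \<in> ?S}" for k
  have card_A: "card (A k) = card (UNIV::'a set) ^ (2*r) * card ?S" if "k < 2*r+1" for k
  proof -
    have "?S \<subseteq> words (2*s+1)" by (auto simp: words_def)
    moreover have "2*?T+1 = k + (2*s+1) + (2*r - k)" "k + (2*r - k) = 2*r" using that by simp_all
    ultimately show ?thesis unfolding A_def by (simp only: card_words_with_middle)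
  qed
  have "{Y. length Y = 2*?T+1 \<and> c (d (place (- int ?T) Y)) 0 \<noteq> c (d' (place (- int ?T) Y)) 0}
      \<subseteq> (\<Union>k<2*r+1. A k)"
  proof clarify
    fix X assume len: "length X = 2*?T+1"
      and ne: "c (d (place (- int ?T) X)) 0 \<noteq> c (d' (place (- int ?T) X)) 0"
    obtain j where j: "- int r \<le> j" "j \<le> int r"
      and ne_j: "d (place (- int ?T) X) j \<noteq> d' (place (- int ?T) X) j"
      using has_radius_local[OF hc, of 0 "d (place (- int ?T) X)" "d' (place (- int ?T) X)"] ne
      by auto
    define k where "k = nat (j + int r)"
    have k: "k < 2*r+1" "nat (j - int s - - int ?T) = k" using j by (auto simp: k_def)
    have "d (place (- int ?T) X) j = d (place (- int s) (take (2*s+1) (drop k X))) 0"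
      "d' (place (- int ?T) X) j = d' (place (- int s) (take (2*s+1) (drop k X))) 0"
      using place_window[OF hd, of "- int ?T" j X] place_window[OF hd', of "- int ?T" j X] j len k
      by simp_all
    then have "X \<in> A k" using ne_j len k by (simp add: A_def)
    then show "X \<in> (\<Union>k<2*r+1. A k)" using k by blast
  qed
  then have "count ?T (\<lambda>x. c (d x) 0 \<noteq> c (d' x) 0) \<le> card (\<Union>k<2*r+1. A k)"
    unfolding count_def by (intro card_mono) (auto simp: A_def)
  also have "\<dots> \<le> (\<Sum>k<2*r+1. card (A k))" by (rule card_UN_le) simp
  also have "\<dots> = (2*r+1) * (card (UNIV::'a set) ^ (2*r) * card ?S)" by (simp add: card_A)
  finally show ?thesis by (simp add: count_def)
qed

lemma density_disagree_comp_le: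
  fixes c d d' :: "(int \<Rightarrow> 'a::finite) \<Rightarrow> (int \<Rightarrow> 'a)"
  assumes "has_radius c r" "has_radius d s" "has_radius d' s"
  shows "density (r + s) (\<lambda>x. c (d x) 0 \<noteq> c (d' x) 0)
     \<le> (2 * real r + 1) * density s (\<lambda>x. d x 0 \<noteq> d' x 0)"
proof -
  let ?q = "real (card (UNIV::'a set))"
  define a where "a = real (count (r + s) (\<lambda>x. c (d x) 0 \<noteq> c (d' x) 0))"
  define b where "b = real (count s (\<lambda>x. d x 0 \<noteq> d' x 0))"
  have q: "?q ^ (2*r) > 0" by (simp add: card_gt_0_iff)
  have "a \<le> real ((2*r+1) * (card (UNIV::'a set) ^ (2*r) * count s (\<lambda>x. d x 0 \<noteq> d' x 0)))"
    unfolding a_def using count_disagree_comp_le[OF assms] by (simp only: of_nat_le_iff)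
  also have "\<dots> = (2 * real r + 1) * (?q ^ (2*r) * b)" by (simp add: b_def algebra_simps)
  finally have "a \<le> (2 * real r + 1) * (?q ^ (2*r) * b)" .
  then have "a / (?q ^ (2*r) * ?q ^ (2*s+1))
      \<le> (2 * real r + 1) * (?q ^ (2*r) * b) / (?q ^ (2*r) * ?q ^ (2*s+1))"
    by (rule divide_right_mono) simp
  also have "\<dots> = (2 * real r + 1) * (b / ?q ^ (2*s+1))" using q by simp
  also have "?q ^ (2*r) * ?q ^ (2*s+1) = ?q ^ (2*(r + s)+1)"
    by (simp add: power_add[symmetric] algebra_simps)
  finally show ?thesis unfolding density_def a_def b_def .
qed

lemma delta_comp_le:
  fixes c c' d d' :: "(int \<Rightarrow> 'a::finite) \<Rightarrow> (int \<Rightarrow> 'a)"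
  assumes "c \<in> CA" "c' \<in> CA" "d \<in> CA" "d' \<in> CA" "surj d'"
  shows "delta (c \<circ> d) (c' \<circ> d') \<le> (2 * real (rad c) + 1) * delta d d' + delta c c'"
proof -
  define Rc where "Rc = max (rad c) (rad c')"
  define Rd where "Rd = max (rad d) (rad d')"
  have c: "has_radius c (rad c)" "has_radius c Rc" "has_radius c' Rc"
    using assms(1,2) by (auto intro: has_radius_of_rad_le simp: Rc_def)
  have d: "has_radius d Rd" "has_radius d' Rd"
    using assms(3,4) by (auto intro: has_radius_of_rad_le simp: Rd_def)
  have "max (rad (c \<circ> d)) (rad (c' \<circ> d')) \<le> Rc + Rd"
    using rad_le[OF has_radius_comp[OF c(2) d(1)]] rad_le[OF has_radius_comp[OF c(3) d(2)]] by simp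
  then have "delta (c \<circ> d) (c' \<circ> d') = density (Rc + Rd) (\<lambda>x. c (d x) 0 \<noteq> c' (d' x) 0)"
    using delta_eq_density[OF CA_comp[OF assms(1,3)] CA_comp[OF assms(2,4)]] by simp
  also have "\<dots> \<le> density (Rc + Rd) (\<lambda>x. c (d x) 0 \<noteq> c (d' x) 0)
      + density (Rc + Rd) (\<lambda>x. c (d' x) 0 \<noteq> c' (d' x) 0)"
    by (rule density_le_add) auto
  finally have split: "delta (c \<circ> d) (c' \<circ> d')
      \<le> density (Rc + Rd) (\<lambda>x. c (d x) 0 \<noteq> c (d' x) 0)
      + density (Rc + Rd) (\<lambda>x. c (d' x) 0 \<noteq> c' (d' x) 0)" .
  have "density (Rc + Rd) (\<lambda>x. c (d x) 0 \<noteq> c (d' x) 0)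
      = density (rad c + Rd) (\<lambda>x. c (d x) 0 \<noteq> c (d' x) 0)"
    using window_local_disagree[OF has_radius_comp[OF c(1) d(1)] has_radius_comp[OF c(1) d(2)]]
    by (intro density_refine) (auto simp: Rc_def)
  also have "\<dots> \<le> (2 * real (rad c) + 1) * density Rd (\<lambda>x. d x 0 \<noteq> d' x 0)"
    by (rule density_disagree_comp_le[OF c(1) d])
  also have "density Rd (\<lambda>x. d x 0 \<noteq> d' x 0) = delta d d'"
    using delta_eq_density[OF assms(3,4), of Rd] by (simp add: Rd_def)
  finally have change_d: "density (Rc + Rd) (\<lambda>x. c (d x) 0 \<noteq> c (d' x) 0)
      \<le> (2 * real (rad c) + 1) * delta d d'" .
  have change_c: "density (Rc + Rd) (\<lambda>x. c (d' x) 0 \<noteq> c' (d' x) 0) = delta c c'"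
    using density_comp_surj[OF d(2) assms(5) window_local_disagree[OF c(2,3)]]
      delta_eq_density[OF assms(1,2), of Rc] by (simp add: Rc_def)
  from split change_d change_c show ?thesis by linarith
qed

text \<open>Continuity of composition on CA \<times> SUR follows from the Lipschitz-type bound
  delta_comp_le with eta = epsilon / (2 r(c) + 2). The bound holds for every finite
  alphabet.\<close>
theorem mainTheorem4:
  assumes "card (UNIV :: 'a::finite set) \<ge> 2"
  shows "\<forall>c \<in> (CA :: ((int \<Rightarrow> 'a) \<Rightarrow> (int \<Rightarrow> 'a)) set). \<forall>d \<in> SUR. \<forall>\<epsilon>>0. \<exists>\<eta>>0.
           \<forall>c' \<in> CA. \<forall>d' \<in> SUR. delta c c' < \<eta> \<and> delta d d' < \<eta> \<longrightarrow>
             delta (c \<circ> d) (c' \<circ> d') < \<epsilon>"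
proof (intro ballI allI impI)
  fix c d :: "(int \<Rightarrow> 'a) \<Rightarrow> (int \<Rightarrow> 'a)" and \<epsilon> :: real
  assume c: "c \<in> CA" and d: "d \<in> SUR" and "\<epsilon> > 0"
  define K where "K = 2 * real (rad c) + 1"
  have K: "K > 0" by (simp add: K_def)
  have "delta (c \<circ> d) (c' \<circ> d') < \<epsilon>"
    if "c' \<in> CA" "d' \<in> SUR" "delta c c' < \<epsilon> / (K + 1)" "delta d d' < \<epsilon> / (K + 1)" for c' d'
  proof -
    have "delta (c \<circ> d) (c' \<circ> d') \<le> K * delta d d' + delta c c'"
      using delta_comp_le[of c c' d d'] c d that(1,2) by (simp add: SUR_def K_def)
    also have "\<dots> < K * (\<epsilon> / (K + 1)) + \<epsilon> / (K + 1)"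
      using that(3,4) K by (intro add_le_less_mono mult_left_mono) auto
    also have "\<dots> = (K + 1) * (\<epsilon> / (K + 1))" by (simp only: distrib_right mult_1_left)
    also have "\<dots> = \<epsilon>" using K by simp
    finally show ?thesis .
  qed
  moreover have "\<epsilon> / (K + 1) > 0" using \<open>\<epsilon> > 0\<close> K by simp
  ultimately show "\<exists>\<eta>>0. \<forall>c' \<in> CA. \<forall>d' \<in> SUR. delta c c' < \<eta> \<and> delta d d' < \<eta> \<longrightarrow>
      delta (c \<circ> d) (c' \<circ> d') < \<epsilon>"
    by blast
qed

end
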